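(* Let $m,r,\delta\ge 1$, $n=m(r+1)$, let $q$ be a prime power, $\alpha$ a primitive element of $\mathbb{F}_q$, and $\beta\in\mathbb{F}_q$ an element of multiplicative order $\psi$ with $\psi\ge r+1$ (so $\psi\mid q-1$), and assume $q-1\ge \psi m$. Let $H_0$ be the $\delta\times(r+1)$ matrix with $(a,b)$ entry $\beta^{ab}$ for $0\le a\le\delta-1$, $0\le b\le r$, and for $j=1,\dots,m$ let $H_j$ be the $2\times(r+1)$ matrix whose first row is $(1,\beta^{\delta},\beta^{2\delta},\dots,\beta^{r\delta})$ and whose second row is $(\alpha^{j-1},\alpha^{j-1}\beta^{-1},\alpha^{j-1}\beta^{-2},\dots,\alpha^{j-1}\beta^{-r})$. Let $\mathcal{C}$ be the code of length $n$ with parity-check matrix $$H=\begin{pmatrix} H_0&0&\cdots&0\\ 0&H_0&\cdots&0\\ \vdots&&\ddots&\vdots\\ 0&0&\cdots&H_0\\ H_1&H_2&\cdots&H_m\end{pmatrix}.$$ Then $\mathcal{C}$ is a maximally recoverable (partial MDS) code: it corrects every erasure pattern consisting of $\delta$ erasures in each of the $m$ local groups (the blocks of $r+1$ consecutive coordinates) together with $2$ additional erasures at arbitrary further positions. *)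

theory Defs
  imports Main
begin

definition mult_order :: "'a::{finite,field} \<Rightarrow> nat" where
  "mult_order x = (LEAST k. 0 < k \<and> x ^ k = 1)"

definition primitive_elem :: "'a::{finite,field} \<Rightarrow> bool" where
  "primitive_elem x \<longleftrightarrow> x \<noteq> 0 \<and> mult_order x = card (UNIV :: 'a set) - 1"

text \<open>The parity-check matrix H, rows 0..m*delta+1, columns 0..m*(r+1)-1.
  Column j lies in local group g = j div (r+1) (group g corresponds to H_(g+1)),
  with in-group index b = j mod (r+1).  Rows g*delta + a (a < delta) form the
  g-th copy of H_0; row m*delta is the first row of the H_j's, row m*delta+1 the
  second row.\<close>
definition pmds_H :: "'a::field \<Rightarrow> 'a \<Rightarrow> nat \<Rightarrow> nat \<Rightarrow> nat \<Rightarrow> nat \<Rightarrow> nat \<Rightarrow> 'a" where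
  "pmds_H \<alpha> \<beta> m r \<delta> i j =
     (if i < m * \<delta> then
        (if j div (r + 1) = i div \<delta> then \<beta> ^ ((i mod \<delta>) * (j mod (r + 1))) else 0)
      else if i = m * \<delta> then \<beta> ^ (\<delta> * (j mod (r + 1)))
      else \<alpha> ^ (j div (r + 1)) * (inverse \<beta>) ^ (j mod (r + 1)))"

definition pmds_code :: "'a::field \<Rightarrow> 'a \<Rightarrow> nat \<Rightarrow> nat \<Rightarrow> nat \<Rightarrow> (nat \<Rightarrow> 'a) set" where
  "pmds_code \<alpha> \<beta> m r \<delta> =
     {c. (\<forall>i\<ge>m * (r + 1). c i = 0) \<and>
         (\<forall>i < m * \<delta> + 2. (\<Sum>j < m * (r + 1). pmds_H \<alpha> \<beta> m r \<delta> i j * c j) = 0)}"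

definition corrects_erasures :: "(nat \<Rightarrow> 'a) set \<Rightarrow> nat set \<Rightarrow> bool" where
  "corrects_erasures C E \<longleftrightarrow>
     (\<forall>c\<in>C. \<forall>d\<in>C. (\<forall>i. i \<notin> E \<longrightarrow> c i = d i) \<longrightarrow> c = d)"

end

theory Submission
  imports Defs "HOL-Computational_Algebra.Polynomial"
begin

text \<open>
  Let \<open>x\<close> be a codeword supported on the erasures and give coordinate \<open>b\<close> of a local group
  the point \<open>z = \<beta>\<^sup>b\<close>; these points are distinct within a group since \<open>\<psi> \<ge> r + 1\<close>. The \<open>H\<^sub>0\<close>-rows
  say that the power sums \<open>\<Sum> z\<^sup>a x\<close>, \<open>a < \<delta>\<close>, over each group vanish, so by Vandermonde a group
  with exactly \<open>\<delta>\<close> erasures carries no information. The two excess erasures lie either in a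
  single group, where the global rows supply the power sums of index \<open>\<delta>\<close> and \<open>-1\<close> and
  Vandermonde applies again, or in two groups \<open>g, h\<close> with \<open>\<delta> + 1\<close> erasures each. In the latter
  case reducing \<open>z\<^sup>\<delta>\<close> modulo \<open>\<Prod>(X - z)\<close> gives \<open>\<Sum> z\<^sup>\<delta> x = \<plusminus>P \<Sum> z\<inverse> x\<close> with \<open>P = \<Prod> z\<close>, so the
  global rows become a \<open>2 \<times> 2\<close> system in the sums \<open>\<Sum> z\<inverse> x\<close> of the two groups. Its determinant
  \<open>P\<^sub>g \<alpha>\<^sup>h - P\<^sub>h \<alpha>\<^sup>g\<close> is nonzero: raising to the power \<open>\<psi>\<close> kills \<open>P\<^sub>g, P\<^sub>h\<close> and leaves
  \<open>\<alpha>\<^sup>\<psi>\<^sup>h \<noteq> \<alpha>\<^sup>\<psi>\<^sup>g\<close>, because \<open>\<psi> m\<close> is at most the order of \<open>\<alpha>\<close>.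
\<close>

lemma power_diff_eq_one:
  fixes x :: "'a::field"
  assumes "x \<noteq> 0" "u \<le> v" "x ^ u = x ^ v"
  shows "x ^ (v - u) = 1"
proof -
  have "x ^ u * x ^ (v - u) = x ^ v"
    using assms(2) by (simp flip: power_add)
  then have "x ^ u * x ^ (v - u) = x ^ u * 1"
    using assms(3) by simp
  then show ?thesis
    using assms(1) by simp
qed

lemma ex_power_eq_one:
  fixes x :: "'a::{finite,field}"
  assumes "x \<noteq> 0"
  shows "\<exists>k>0. x ^ k = 1"
proof -
  have "\<not> inj (\<lambda>n::nat. x ^ n)"
    using finite_imageD infinite_UNIV_nat by (metis finite)
  then obtain i j :: nat where "i < j" "x ^ i = x ^ j"
    unfolding inj_def by (metis linorder_neq_iff)
  then show ?thesis
    using power_diff_eq_one[OF assms] by (metis less_imp_le zero_less_diff)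
qed

lemma power_mult_order:
  fixes x :: "'a::{finite,field}"
  assumes "x \<noteq> 0"
  shows "x ^ mult_order x = 1"
  using LeastI_ex[OF ex_power_eq_one[OF assms]] by (simp add: mult_order_def)

lemma power_neq_one_below_mult_order:
  fixes x :: "'a::{finite,field}"
  assumes "0 < k" "k < mult_order x"
  shows "x ^ k \<noteq> 1"
  using not_less_Least[of k "\<lambda>k. 0 < k \<and> x ^ k = 1"] assms
  unfolding mult_order_def by auto

lemma inj_on_power_below_mult_order:
  fixes x :: "'a::{finite,field}"
  assumes "x \<noteq> 0"
  shows "inj_on ((^) x) {..<mult_order x}"
proof (rule linorder_inj_onI')
  fix u v assume "u \<in> {..<mult_order x}" "v \<in> {..<mult_order x}" "u < v"
  then show "x ^ u \<noteq> x ^ v"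
    using power_diff_eq_one[OF assms, of u v] power_neq_one_below_mult_order[of "v - u" x]
    by auto
qed

lemma sum_poly_mult:
  fixes z x :: "'b \<Rightarrow> 'a::comm_ring_1"
  shows "(\<Sum>b\<in>S. poly p (z b) * x b) = (\<Sum>k\<le>degree p. coeff p k * (\<Sum>b\<in>S. z b ^ k * x b))"
  by (simp add: poly_altdef sum_distrib_left sum_distrib_right mult.assoc sum.swap[of _ S])

lemma prod_monic_linear:
  fixes z :: "'b \<Rightarrow> 'a::idom"
  assumes "finite T"
  shows "degree (\<Prod>b\<in>T. [:- z b, 1:]) = card T"
    and "lead_coeff (\<Prod>b\<in>T. [:- z b, 1:]) = 1"
proof -
  show "degree (\<Prod>b\<in>T. [:- z b, 1:]) = card T"
    using assms by (simp add: degree_prod_eq_sum_degree)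
  show "lead_coeff (\<Prod>b\<in>T. [:- z b, 1:]) = 1"
    using lead_coeff_prod[of "\<lambda>b. [:- z b, 1:]" T] by simp
qed

lemma power_sums_eq_zero_imp_zero:
  fixes z x :: "'b \<Rightarrow> 'a::idom"
  assumes "finite S" "inj_on z S"
    and power_sums: "\<And>a. a < card S \<Longrightarrow> (\<Sum>b\<in>S. z b ^ a * x b) = 0"
    and "b \<in> S"
  shows "x b = 0"
proof -
  define L where "L = (\<Prod>b'\<in>S - {b}. [:- z b', 1:])"
  have "card S > 0"
    using assms(1,4) card_gt_0_iff by blast
  then have "degree L < card S"
    using assms(1,4) by (simp add: L_def prod_monic_linear)
  then have "(\<Sum>b'\<in>S. poly L (z b') * x b') = 0"
    unfolding sum_poly_mult by (intro sum.neutral) (simp add: power_sums)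
  moreover have "poly L (z b') = 0" if "b' \<in> S - {b}" for b'
    using that assms(1) by (auto simp: L_def poly_prod)
  then have "(\<Sum>b'\<in>S. poly L (z b') * x b') = poly L (z b) * x b"
    using assms(1,4) by (simp add: sum.remove)
  moreover have "poly L (z b) \<noteq> 0"
    using assms by (auto simp: L_def poly_prod inj_on_def)
  ultimately show ?thesis
    by simp
qed

lemma inverse_and_power_sums_eq_zero_imp_zero:
  fixes z x :: "'b \<Rightarrow> 'a::field"
  assumes "finite S" "inj_on z S" and nonzero: "\<And>b. b \<in> S \<Longrightarrow> z b \<noteq> 0"
    and inverse_sum: "(\<Sum>b\<in>S. inverse (z b) * x b) = 0"
    and power_sums: "\<And>a. Suc a < card S \<Longrightarrow> (\<Sum>b\<in>S. z b ^ a * x b) = 0"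
    and "b \<in> S"
  shows "x b = 0"
proof -
  have "(\<Sum>b\<in>S. z b ^ a * (inverse (z b) * x b)) = 0" if "a < card S" for a
  proof (cases a)
    case 0
    then show ?thesis
      using inverse_sum by simp
  next
    case (Suc a')
    have "z b ^ a * (inverse (z b) * x b) = z b ^ a' * x b" if "b \<in> S" for b
      using nonzero[OF that] Suc by (simp add: field_simps)
    then have "(\<Sum>b\<in>S. z b ^ a * (inverse (z b) * x b)) = (\<Sum>b\<in>S. z b ^ a' * x b)"
      by (rule sum.cong[OF refl])
    then show ?thesis
      using power_sums that Suc by simp
  qed
  then have "inverse (z b) * x b = 0"
    by (intro power_sums_eq_zero_imp_zero[where x = "\<lambda>b. inverse (z b) * x b", OF assms(1,2) _ assms(6)])
  then show ?thesis
    using nonzero assms(6) by simp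
qed

lemma power_sum_eq_prod_times_inverse_sum:
  fixes z x :: "'b \<Rightarrow> 'a::field"
  assumes "finite S" and nonzero: "\<And>b. b \<in> S \<Longrightarrow> z b \<noteq> 0" and "card S = Suc d"
    and power_sums: "\<And>a. a < d \<Longrightarrow> (\<Sum>b\<in>S. z b ^ a * x b) = 0"
  shows "(\<Sum>b\<in>S. z b ^ d * x b) = (-1) ^ d * (\<Prod>b\<in>S. z b) * (\<Sum>b\<in>S. inverse (z b) * x b)"
proof -
  define Q where "Q = (\<Prod>b\<in>S. [:- z b, 1:])"
  have deg: "degree Q = Suc d" and lead: "coeff Q (Suc d) = 1"
    using prod_monic_linear[OF assms(1), of z] assms(3) by (simp_all add: Q_def)
  have "coeff Q 0 = (\<Prod>b\<in>S. - z b)"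
    by (simp add: Q_def poly_prod flip: poly_0_coeff_0)
  also have "\<dots> = - ((-1) ^ d * (\<Prod>b\<in>S. z b))"
    using assms(3) by (simp add: prod_uminus)
  finally have const: "coeff Q 0 = - ((-1) ^ d * (\<Prod>b\<in>S. z b))" .
  \<comment> \<open>Dividing \<open>Q(z b) = 0\<close> by \<open>z b\<close> expresses \<open>1 / z b\<close> as a polynomial in \<open>z b\<close>.\<close>
  have inverse_eq: "- coeff Q 0 * inverse (z b) = (\<Sum>k\<le>d. coeff Q (Suc k) * z b ^ k)"
    if "b \<in> S" for b
  proof -
    have "0 = poly Q (z b)"
      using assms(1) that by (auto simp: Q_def poly_prod)
    also have "\<dots> = coeff Q 0 + (\<Sum>k\<le>d. coeff Q (Suc k) * z b ^ k) * z b"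
      unfolding poly_altdef deg sum.atMost_Suc_shift sum_distrib_right
      by (simp add: mult_ac)
    finally have "- coeff Q 0 = (\<Sum>k\<le>d. coeff Q (Suc k) * z b ^ k) * z b"
      by (metis neg_eq_iff_add_eq_0)
    then show ?thesis
      using nonzero[OF that] by (simp add: field_simps)
  qed
  have "(-1) ^ d * (\<Prod>b\<in>S. z b) * (\<Sum>b\<in>S. inverse (z b) * x b)
      = (\<Sum>b\<in>S. (- coeff Q 0 * inverse (z b)) * x b)"
    by (simp add: const sum_distrib_left mult.assoc)
  also have "\<dots> = (\<Sum>b\<in>S. (\<Sum>k\<le>d. coeff Q (Suc k) * z b ^ k) * x b)"
    using inverse_eq by (intro sum.cong) simp_all
  also have "\<dots> = (\<Sum>k\<le>d. coeff Q (Suc k) * (\<Sum>b\<in>S. z b ^ k * x b))"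
    by (simp add: sum_distrib_left sum_distrib_right mult.assoc sum.swap[of _ S])
  also have "\<dots> = (\<Sum>b\<in>S. z b ^ d * x b)"
    by (subst sum.mono_neutral_right[of "{..d}" "{d}"]) (auto simp: power_sums lead)
  finally show ?thesis ..
qed

lemma linear_system_2x2_eq_zero:
  fixes a b c d u v :: "'a::field"
  assumes "a * d \<noteq> b * c" "a * u + b * v = 0" "c * u + d * v = 0"
  shows "u = 0" and "v = 0"
proof -
  have "(a * d - b * c) * u = d * (a * u + b * v) - b * (c * u + d * v)"
    and "(a * d - b * c) * v = a * (c * u + d * v) - c * (a * u + b * v)"
    by algebra+
  then have "(a * d - b * c) * u = 0" and "(a * d - b * c) * v = 0"
    by (simp_all only: assms(2,3) mult_zero_right diff_zero)
  then show "u = 0" and "v = 0"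
    using assms(1) by simp_all
qed

lemma sum_eq_2_cases:
  fixes e :: "'b \<Rightarrow> nat"
  assumes "finite I" "sum e I = 2"
  obtains g where "g \<in> I" "e g = 2" "\<And>g'. g' \<in> I \<Longrightarrow> g' \<noteq> g \<Longrightarrow> e g' = 0"
    | g h where "g \<in> I" "h \<in> I" "g \<noteq> h" "e g = 1" "e h = 1"
        "\<And>g'. g' \<in> I \<Longrightarrow> g' \<noteq> g \<Longrightarrow> g' \<noteq> h \<Longrightarrow> e g' = 0"
proof -
  obtain g where g: "g \<in> I" "e g > 0"
    using assms by (metis gr0I sum.neutral zero_neq_numeral)
  have rest_g: "e g + sum e (I - {g}) = 2"
    using assms g by (simp add: sum.remove)
  show ?thesis
  proof (cases "e g = 2")
    case True
    then have "sum e (I - {g}) = 0"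
      using rest_g by simp
    then have "e g' = 0" if "g' \<in> I" "g' \<noteq> g" for g'
      using assms(1) that by simp
    then show ?thesis
      using that(1) g True by blast
  next
    case False
    then have "e g = 1" and rest_g1: "sum e (I - {g}) = 1"
      using g rest_g by linarith+
    then obtain h where h: "h \<in> I - {g}" "e h > 0"
      by (metis gr0I sum.neutral zero_neq_one)
    have "e h + sum e (I - {g} - {h}) = 1"
      using assms(1) rest_g1 h by (simp add: sum.remove)
    then have "e h = 1" "sum e (I - {g} - {h}) = 0"
      using h by linarith+
    moreover have "e g' = 0" if "g' \<in> I" "g' \<noteq> g" "g' \<noteq> h" for g'
      using calculation(2) assms(1) that by simp
    ultimately show ?thesis
      using that(2)[of g h] g h \<open>e g = 1\<close> by blast
  qed
qed

lemma pmds_code_diff: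
  assumes "c \<in> pmds_code \<alpha> \<beta> m r \<delta>" "d \<in> pmds_code \<alpha> \<beta> m r \<delta>"
  shows "(\<lambda>j. c j - d j) \<in> pmds_code \<alpha> \<beta> m r \<delta>"
  using assms by (simp add: pmds_code_def right_diff_distrib sum_subtractf)

lemma div_eq_iff_atLeastLessThan:
  fixes j g k :: nat
  assumes "0 < k"
  shows "j div k = g \<longleftrightarrow> j \<in> {g * k..<(g + 1) * k}"
proof
  assume "j div k = g"
  then have "j = g * k + j mod k"
    by (metis div_mult_mod_eq)
  then show "j \<in> {g * k..<(g + 1) * k}"
    using mod_less_divisor[OF assms, of j] by (simp add: algebra_simps)
next
  assume "j \<in> {g * k..<(g + 1) * k}"
  then show "j div k = g"
    by (intro div_nat_eqI) (auto simp: mult.commute)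
qed

locale pmds_erasure =
  fixes \<alpha> \<beta> :: "'a::{finite,field}"
    and m r \<delta> \<psi> :: nat
    and E :: "nat set"
    and x :: "nat \<Rightarrow> 'a"
  assumes alpha_nonzero: "\<alpha> \<noteq> 0" and alpha_order: "\<psi> * m \<le> mult_order \<alpha>"
    and beta_nonzero: "\<beta> \<noteq> 0" and beta_order: "mult_order \<beta> = \<psi>"
    and group_length: "r + 1 \<le> \<psi>"
    and erasures: "E \<subseteq> {..<m * (r + 1)}"
    and card_erasures: "card E = m * \<delta> + 2"
    and card_local_erasures: "\<And>g. g < m \<Longrightarrow> \<delta> \<le> card (E \<inter> {g * (r + 1)..<(g + 1) * (r + 1)})"
    and codeword: "x \<in> pmds_code \<alpha> \<beta> m r \<delta>"
    and supported: "\<And>j. j \<notin> E \<Longrightarrow> x j = 0"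
begin

definition group :: "nat \<Rightarrow> nat set" where
  "group g = {j \<in> E. j div (r + 1) = g}"

text \<open>Column \<open>j\<close> of \<open>H\<close> is \<open>(node j ^ a)\<^sub>a\<^sub><\<^sub>\<delta>\<close> in the \<open>H\<^sub>0\<close>-block of its group, followed by
  \<open>node j ^ \<delta>\<close> and \<open>\<alpha> ^ g / node j\<close> in the two global rows.\<close>
definition node :: "nat \<Rightarrow> 'a" where
  "node j = \<beta> ^ (j mod (r + 1))"

definition power_sum :: "nat \<Rightarrow> nat \<Rightarrow> 'a" where
  "power_sum g a = (\<Sum>j\<in>group g. node j ^ a * x j)"

definition inverse_sum :: "nat \<Rightarrow> 'a" where
  "inverse_sum g = (\<Sum>j\<in>group g. inverse (node j) * x j)"

lemma finite_erasures: "finite E"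
  using erasures finite_subset by blast

lemma finite_group: "finite (group g)"
  using finite_erasures by (simp add: group_def)

lemma group_div_less: "j \<in> E \<Longrightarrow> j div (r + 1) < m"
  using erasures by (auto simp: less_mult_imp_div_less)

lemma mem_group_div: "j \<in> E \<Longrightarrow> j \<in> group (j div (r + 1))"
  by (simp add: group_def)

lemma card_group_ge:
  assumes "g < m"
  shows "\<delta> \<le> card (group g)"
proof -
  have "group g = E \<inter> {g * (r + 1)..<(g + 1) * (r + 1)}"
    by (auto simp: group_def div_eq_iff_atLeastLessThan)
  then show ?thesis
    using card_local_erasures[OF assms] by simp
qed

lemma sum_erasures_by_group: "(\<Sum>j\<in>E. f j) = (\<Sum>g<m. \<Sum>j\<in>group g. f j)"
proof -
  have "E = (\<Union>g<m. group g)"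
    using group_div_less mem_group_div by (auto simp: group_def)
  then have "(\<Sum>j\<in>E. f j) = (\<Sum>j\<in>(\<Union>g<m. group g). f j)"
    by (rule arg_cong)
  also have "\<dots> = (\<Sum>g<m. \<Sum>j\<in>group g. f j)"
    by (rule sum.UNION_disjoint) (auto simp: finite_group, auto simp: group_def)
  finally show ?thesis .
qed

lemma sum_excess: "(\<Sum>g<m. card (group g) - \<delta>) = 2"
proof -
  have "(\<Sum>g<m. card (group g)) = m * \<delta> + 2"
    using sum_erasures_by_group[of "\<lambda>_. 1 :: nat"] card_erasures by simp
  then show ?thesis
    using card_group_ge by (subst sum_subtractf_nat) auto
qed

lemma node_nonzero: "node j \<noteq> 0"
  using beta_nonzero by (simp add: node_def)

lemma node_power_order: "node j ^ \<psi> = 1"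
proof -
  have "node j ^ \<psi> = (\<beta> ^ \<psi>) ^ (j mod (r + 1))"
    by (simp add: node_def mult.commute flip: power_mult)
  then show ?thesis
    using power_mult_order[OF beta_nonzero] beta_order by simp
qed

lemma inj_on_node: "inj_on node (group g)"
proof
  fix j j' assume "j \<in> group g" "j' \<in> group g" "node j = node j'"
  moreover have "j mod (r + 1) < mult_order \<beta>" "j' mod (r + 1) < mult_order \<beta>"
    using mod_less_divisor[of "r + 1" j] mod_less_divisor[of "r + 1" j'] group_length beta_order
    by linarith+
  ultimately have "j mod (r + 1) = j' mod (r + 1)" "j div (r + 1) = j' div (r + 1)"
    using inj_on_power_below_mult_order[OF beta_nonzero]
    by (auto simp: node_def group_def inj_on_def)
  then show "j = j'"
    by (metis div_mult_mod_eq)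
qed

lemma parity_check:
  assumes "i < m * \<delta> + 2"
  shows "(\<Sum>j\<in>E. pmds_H \<alpha> \<beta> m r \<delta> i j * x j) = 0"
proof -
  have "(\<Sum>j\<in>E. pmds_H \<alpha> \<beta> m r \<delta> i j * x j) = (\<Sum>j<m * (r + 1). pmds_H \<alpha> \<beta> m r \<delta> i j * x j)"
    using erasures supported by (intro sum.mono_neutral_left) auto
  then show ?thesis
    using codeword assms by (simp add: pmds_code_def)
qed

lemma local_power_sum:
  assumes "g < m" "a < \<delta>"
  shows "power_sum g a = 0"
proof -
  define i where "i = g * \<delta> + a"
  have "i < m * \<delta>"
  proof -
    have "i < Suc g * \<delta>"
      using assms(2) by (simp add: i_def)
    also have "\<dots> \<le> m * \<delta>"
      using assms(1) by (intro mult_right_mono) auto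
    finally show ?thesis .
  qed
  moreover have "i div \<delta> = g" "i mod \<delta> = a"
    using assms(2) by (simp_all add: i_def)
  ultimately have "(\<Sum>j\<in>E. pmds_H \<alpha> \<beta> m r \<delta> i j * x j) = power_sum g a"
    unfolding power_sum_def
    by (intro sum.mono_neutral_cong_right finite_erasures)
      (auto simp: pmds_H_def group_def node_def power_mult mult.commute[of a])
  then show ?thesis
    using parity_check[of i] \<open>i < m * \<delta>\<close> by simp
qed

lemma global_power_sum: "(\<Sum>g<m. power_sum g \<delta>) = 0"
proof -
  have "pmds_H \<alpha> \<beta> m r \<delta> (m * \<delta>) j = node j ^ \<delta>" for j
    by (simp add: pmds_H_def node_def power_mult mult.commute[of \<delta>])
  then show ?thesis
    using parity_check[of "m * \<delta>"] by (simp add: power_sum_def sum_erasures_by_group)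
qed

lemma global_inverse_sum: "(\<Sum>g<m. \<alpha> ^ g * inverse_sum g) = 0"
proof -
  have "(\<Sum>j\<in>E. pmds_H \<alpha> \<beta> m r \<delta> (m * \<delta> + 1) j * x j)
      = (\<Sum>g<m. \<Sum>j\<in>group g. \<alpha> ^ g * (inverse (node j) * x j))"
    unfolding sum_erasures_by_group
    by (intro sum.cong refl) (simp add: pmds_H_def node_def group_def power_inverse mult.assoc)
  then show ?thesis
    using parity_check[of "m * \<delta> + 1"] by (simp add: inverse_sum_def sum_distrib_left)
qed

lemma group_vanishes_of_card_eq:
  assumes "g < m" "card (group g) = \<delta>" "j \<in> group g"
  shows "x j = 0"
  using power_sums_eq_zero_imp_zero[OF finite_group inj_on_node _ assms(3)] local_power_sum assms
  by (simp add: power_sum_def)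

lemma group_vanishes:
  assumes "g < m" "card (group g) \<le> \<delta> + 2" "power_sum g \<delta> = 0" "inverse_sum g = 0"
    and "j \<in> group g"
  shows "x j = 0"
proof (rule inverse_and_power_sums_eq_zero_imp_zero[OF finite_group inj_on_node node_nonzero _ _ assms(5)])
  show "(\<Sum>j\<in>group g. inverse (node j) * x j) = 0"
    using assms(4) by (simp add: inverse_sum_def)
  fix a assume "Suc a < card (group g)"
  then have "a < \<delta> \<or> a = \<delta>"
    using assms(2) by linarith
  then show "(\<Sum>j\<in>group g. node j ^ a * x j) = 0"
    using local_power_sum assms(1,3) by (auto simp: power_sum_def)
qed

lemma power_sum_eq_prod_times_inverse_sum_group:
  assumes "g < m" "card (group g) = Suc \<delta>"
  shows "power_sum g \<delta> = (-1) ^ \<delta> * (\<Prod>j\<in>group g. node j) * inverse_sum g"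
  using power_sum_eq_prod_times_inverse_sum[OF finite_group node_nonzero assms(2)] local_power_sum assms(1)
  by (simp add: power_sum_def inverse_sum_def)

lemma prod_node_times_alpha_neq:
  assumes "g < m" "h < m" "g \<noteq> h"
  shows "(\<Prod>j\<in>group g. node j) * \<alpha> ^ h \<noteq> (\<Prod>j\<in>group h. node j) * \<alpha> ^ g"
proof
  assume "(\<Prod>j\<in>group g. node j) * \<alpha> ^ h = (\<Prod>j\<in>group h. node j) * \<alpha> ^ g"
  then have "((\<Prod>j\<in>group g. node j) * \<alpha> ^ h) ^ \<psi> = ((\<Prod>j\<in>group h. node j) * \<alpha> ^ g) ^ \<psi>"
    by simp
  then have "\<alpha> ^ (h * \<psi>) = \<alpha> ^ (g * \<psi>)"
    by (simp add: power_mult_distrib prod_power_distrib node_power_order flip: power_mult)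
  moreover have "k * \<psi> < mult_order \<alpha>" if "k < m" for k
  proof -
    have "k * \<psi> < m * \<psi>"
      using that group_length by simp
    then show ?thesis
      using alpha_order by (metis mult.commute order_less_le_trans)
  qed
  ultimately have "h * \<psi> = g * \<psi>"
    using inj_onD[OF inj_on_power_below_mult_order[OF alpha_nonzero]] assms(1,2) by (metis lessThan_iff)
  then show False
    using assms(3) group_length by simp
qed

lemma sums_eq_zero_of_card_eq:
  assumes "g < m" "card (group g) = \<delta>"
  shows "power_sum g a = 0" and "inverse_sum g = 0"
  using group_vanishes_of_card_eq[OF assms] by (simp_all add: power_sum_def inverse_sum_def)

lemma vanishes_of_excess_in_one_group:
  assumes "g0 < m" "card (group g0) = \<delta> + 2"
    and others: "\<And>g. g < m \<Longrightarrow> g \<noteq> g0 \<Longrightarrow> card (group g) = \<delta>"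
    and "g < m" "j \<in> group g"
  shows "x j = 0"
proof (cases "g = g0")
  case False
  then show ?thesis
    using group_vanishes_of_card_eq others assms(4,5) by blast
next
  case True
  have sum_eq: "(\<Sum>g<m. f g) = f g0" if "\<And>g. g < m \<Longrightarrow> g \<noteq> g0 \<Longrightarrow> f g = 0"
    for f :: "nat \<Rightarrow> 'a"
    using sum.mono_neutral_right[of "{..<m}" "{g0}" f] assms(1) that by auto
  have "power_sum g0 \<delta> = 0"
    using global_power_sum sum_eq[of "\<lambda>g. power_sum g \<delta>"] sums_eq_zero_of_card_eq others
    by simp
  moreover have "\<alpha> ^ g0 * inverse_sum g0 = 0"
    using global_inverse_sum sum_eq[of "\<lambda>g. \<alpha> ^ g * inverse_sum g"] sums_eq_zero_of_card_eq others
    by simp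
  ultimately show ?thesis
    using group_vanishes[of g0] alpha_nonzero assms(1,2,5) True by simp
qed

lemma vanishes_of_excess_in_two_groups:
  assumes "g0 < m" "h0 < m" "g0 \<noteq> h0" "card (group g0) = Suc \<delta>" "card (group h0) = Suc \<delta>"
    and others: "\<And>g. g < m \<Longrightarrow> g \<noteq> g0 \<Longrightarrow> g \<noteq> h0 \<Longrightarrow> card (group g) = \<delta>"
    and "g < m" "j \<in> group g"
  shows "x j = 0"
proof -
  have sum_eq: "(\<Sum>g<m. f g) = f g0 + f h0"
    if "\<And>g. g < m \<Longrightarrow> g \<noteq> g0 \<Longrightarrow> g \<noteq> h0 \<Longrightarrow> f g = 0" for f :: "nat \<Rightarrow> 'a"
    using sum.mono_neutral_right[of "{..<m}" "{g0, h0}" f] assms(1-3) that by auto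
  define P where "P g = (\<Prod>j\<in>group g. node j)" for g
  have "(-1) ^ \<delta> * (P g0 * inverse_sum g0 + P h0 * inverse_sum h0) = power_sum g0 \<delta> + power_sum h0 \<delta>"
    using power_sum_eq_prod_times_inverse_sum_group assms(1,2,4,5)
    by (simp add: P_def algebra_simps)
  also have "\<dots> = 0"
    using global_power_sum sum_eq[of "\<lambda>g. power_sum g \<delta>"] sums_eq_zero_of_card_eq others
    by simp
  finally have "P g0 * inverse_sum g0 + P h0 * inverse_sum h0 = 0"
    by simp
  moreover have "\<alpha> ^ g0 * inverse_sum g0 + \<alpha> ^ h0 * inverse_sum h0 = 0"
    using global_inverse_sum sum_eq[of "\<lambda>g. \<alpha> ^ g * inverse_sum g"] sums_eq_zero_of_card_eq others
    by simp
  moreover have "P g0 * \<alpha> ^ h0 \<noteq> P h0 * \<alpha> ^ g0"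
    using prod_node_times_alpha_neq assms(1-3) by (simp add: P_def)
  ultimately have "inverse_sum g0 = 0" "inverse_sum h0 = 0"
    using linear_system_2x2_eq_zero by blast+
  moreover have "power_sum g0 \<delta> = 0" "power_sum h0 \<delta> = 0"
    using calculation power_sum_eq_prod_times_inverse_sum_group assms(1,2,4,5) by simp_all
  ultimately have "card (group g) \<le> \<delta> + 2 \<and> power_sum g \<delta> = 0 \<and> inverse_sum g = 0"
    using others[of g] sums_eq_zero_of_card_eq[of g] assms(4,5,7) by (cases "g = g0 \<or> g = h0") auto
  then show ?thesis
    using group_vanishes assms(7,8) by blast
qed

lemma codeword_eq_zero: "x j = 0"
proof (cases "j \<in> E")
  case True
  define g where "g = j div (r + 1)"
  have g: "g < m" "j \<in> group g"
    using True group_div_less mem_group_div by (simp_all add: g_def)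
  have card_eq: "card (group g') = \<delta> + (card (group g') - \<delta>)" if "g' < m" for g'
    using card_group_ge[OF that] by simp
  show ?thesis
  proof (rule sum_eq_2_cases[OF finite_lessThan sum_excess])
    fix g0 assume g0: "g0 \<in> {..<m}" "card (group g0) - \<delta> = 2"
      and others: "\<And>g'. g' \<in> {..<m} \<Longrightarrow> g' \<noteq> g0 \<Longrightarrow> card (group g') - \<delta> = 0"
    show ?thesis
    proof (rule vanishes_of_excess_in_one_group[OF _ _ _ g])
      show "g0 < m" "card (group g0) = \<delta> + 2"
        using g0 card_eq[of g0] by simp_all
      show "card (group g') = \<delta>" if "g' < m" "g' \<noteq> g0" for g'
        using others[of g'] card_eq[of g'] that by simp
    qed
  next
    fix g0 h0 assume g0h0: "g0 \<in> {..<m}" "h0 \<in> {..<m}" "g0 \<noteq> h0"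
      "card (group g0) - \<delta> = 1" "card (group h0) - \<delta> = 1"
      and others: "\<And>g'. g' \<in> {..<m} \<Longrightarrow> g' \<noteq> g0 \<Longrightarrow> g' \<noteq> h0 \<Longrightarrow> card (group g') - \<delta> = 0"
    show ?thesis
    proof (rule vanishes_of_excess_in_two_groups[OF _ _ _ _ _ _ g])
      show "g0 < m" "h0 < m" "g0 \<noteq> h0" "card (group g0) = Suc \<delta>" "card (group h0) = Suc \<delta>"
        using g0h0 card_eq[of g0] card_eq[of h0] by simp_all
      show "card (group g') = \<delta>" if "g' < m" "g' \<noteq> g0" "g' \<noteq> h0" for g'
        using others[of g'] card_eq[of g'] that by simp
    qed
  qed
next
  case False
  then show ?thesis
    by (rule supported)
qed

end

theorem mainTheorem5:
  fixes \<alpha> \<beta> :: "'a::{finite,field}"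
    and m r \<delta> \<psi> :: nat
    and E :: "nat set"
  assumes "m \<ge> 1" and "r \<ge> 1" and "\<delta> \<ge> 1"
    and "primitive_elem \<alpha>"
    and "\<beta> \<noteq> 0" and "mult_order \<beta> = \<psi>" and "\<psi> \<ge> r + 1"
    and "card (UNIV :: 'a set) - 1 \<ge> \<psi> * m"
    and "E \<subseteq> {..<m * (r + 1)}"
    and "card E = m * \<delta> + 2"
    and "\<forall>g<m. card (E \<inter> {g * (r + 1)..<(g + 1) * (r + 1)}) \<ge> \<delta>"
  shows "corrects_erasures (pmds_code \<alpha> \<beta> m r \<delta>) E"
  unfolding corrects_erasures_def
proof (intro ballI impI ext)
  fix c d j
  assume "c \<in> pmds_code \<alpha> \<beta> m r \<delta>" "d \<in> pmds_code \<alpha> \<beta> m r \<delta>"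
    and "\<forall>i. i \<notin> E \<longrightarrow> c i = d i"
  then interpret pmds_erasure \<alpha> \<beta> m r \<delta> \<psi> E "\<lambda>j. c j - d j"
    using assms pmds_code_diff by unfold_locales (auto simp: primitive_elem_def)
  show "c j = d j"
    using codeword_eq_zero[of j] by simp
qed

end
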